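(* Let $(p_j)_{j\ge1}$, with $p_j\in[0,1]$ and $\sum_j p_j<\infty$, be regularly varying with index $\alpha\in(0,1)$ and slowly varying function $\ell$. Then for every fixed $r\ge1$, as $n\to+\infty$, $$\mathbb{E}[K_{n,r}]\simeq \frac{\alpha\,\Gamma(r-\alpha)}{r!}\,n^\alpha\ell(n),$$ where $\Gamma$ is the Gamma function and $f\simeq g$ means $f/g\to1$.
   Context: Bernoulli product feature model: observations $Y_1,Y_2,\dots$ are i.i.d., each $Y_i=(Y_{i,j})_{j\ge1}$ a sequence of independent Bernoulli$(p_j)$ random variables; $X_{n,j}=\sum_{i=1}^nY_{i,j}$, and $K_{n,r}=\sum_{j\ge1}\mathbf{1}\{X_{n,j}=r\}$. Regular variation: let $\overline{\nu}(x):=\#\{j\ge1: p_j\ge x\}$ for $x\in(0,1]$. The sequence $(p_j)$ is regularly varying with index $\alpha\in(0,1)$ if $\overline{\nu}(x)\simeq x^{-\alpha}\ell(1/x)$ as $x\downarrow0$, where $\ell$ is slowly varying, i.e. $\ell(ct)/\ell(t)\to1$ as $t\to+\infty$ for every $c>0$. *)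

theory Defs
  imports "HOL-Probability.Probability" "HOL-Library.Landau_Symbols"
begin

text \<open>The whole array \<open>(Y i j)\<close>, \<open>i,j \<in> nat\<close>,
  of independent Bernoulli variables (\<open>Y i j\<close> has parameter \<open>p j\<close>) lives on the
  infinite product space below; observation index i, feature index j.\<close>

definition feature_space :: "(nat \<Rightarrow> real) \<Rightarrow> ((nat \<times> nat) \<Rightarrow> bool) measure" where
  "feature_space p = (\<Pi>\<^sub>M ij\<in>UNIV. measure_pmf (bernoulli_pmf (p (snd ij))))"

text \<open>\<open>X n j = \<Sum>_{i=1}^n Y i j\<close> (observations indexed from 0 here).\<close>
definition Xcount :: "nat \<Rightarrow> nat \<Rightarrow> ((nat \<times> nat) \<Rightarrow> bool) \<Rightarrow> nat" where
  "Xcount n j \<omega> = card {i. i < n \<and> \<omega> (i, j)}"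

definition Kcount :: "nat \<Rightarrow> nat \<Rightarrow> ((nat \<times> nat) \<Rightarrow> bool) \<Rightarrow> nat" where
  "Kcount n r \<omega> = card {j. Xcount n j \<omega> = r}"

definition EK :: "(nat \<Rightarrow> real) \<Rightarrow> nat \<Rightarrow> nat \<Rightarrow> real" where
  "EK p n r = (\<integral>\<omega>. real (Kcount n r \<omega>) \<partial>feature_space p)"

definition nubar :: "(nat \<Rightarrow> real) \<Rightarrow> real \<Rightarrow> real" where
  "nubar p x = real (card {j. p j \<ge> x})"

definition slowly_varying :: "(real \<Rightarrow> real) \<Rightarrow> bool" where
  "slowly_varying L \<longleftrightarrow> (\<forall>c>0. ((\<lambda>t. L (c * t) / L t) \<longlongrightarrow> 1) at_top)"

definition regularly_varying :: "(nat \<Rightarrow> real) \<Rightarrow> real \<Rightarrow> (real \<Rightarrow> real) \<Rightarrow> bool" where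
  "regularly_varying p \<alpha> L \<longleftrightarrow>
     slowly_varying L \<and> (nubar p \<sim>[at_right 0] (\<lambda>x. x powr (-\<alpha>) * L (1 / x)))"

end

theory Submission
  imports Defs "HOL-Real_Asymp.Real_Asymp"
begin

text \<open>By linearity, \<open>E K\<^sub>n\<^sub>,\<^sub>r = \<Sum>\<^sub>j F\<^sub>n(n p\<^sub>j)\<close> with
  \<open>F\<^sub>n(t) = (n choose r) n\<^sup>-\<^sup>r t\<^sup>r (1 - t/n)\<^sup>n\<^sup>-\<^sup>r\<close>. As \<open>F\<^sub>n(0) = 0\<close>, writing
  \<open>F\<^sub>n(n p\<^sub>j) = \<integral>\<^sub>0\<^sup>n\<^sup>p\<^sup>j F\<^sub>n'\<close> and summing over \<open>j\<close> turns the sum into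
  \<open>\<integral>\<^sub>0\<^sup>\<infinity> F\<^sub>n'(t) \<nu>(t/n) dt\<close>. After division by \<open>\<nu>(1/n) \<sim> n\<^sup>\<alpha> \<ell>(n)\<close> the integrand
  tends to \<open>(t\<^sup>r e\<^sup>-\<^sup>t/r!)' t\<^sup>-\<^sup>\<alpha>\<close> by regular variation, a Potter bound
  \<open>\<nu>(s x) \<le> 2\<^sup>\<beta> s\<^sup>-\<^sup>\<beta> \<nu>(x)\<close> with \<open>\<alpha> < \<beta> < 1\<close> provides an integrable majorant, and the
  limit integral is \<open>(r \<Gamma>(r-\<alpha>) - \<Gamma>(r-\<alpha>+1))/r! = \<alpha> \<Gamma>(r-\<alpha>)/r!\<close>.\<close>

section \<open>Binomial profiles and their Poisson limit\<close>

definition binom_scale :: "nat \<Rightarrow> nat \<Rightarrow> real" where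
  "binom_scale r n = real (n choose r) / real n ^ r"

definition binom_profile :: "nat \<Rightarrow> nat \<Rightarrow> real \<Rightarrow> real" where
  "binom_profile r n t = binom_scale r n * t ^ r * (1 - t / n) ^ (n - r)"

definition binom_profile_deriv :: "nat \<Rightarrow> nat \<Rightarrow> real \<Rightarrow> real" where
  "binom_profile_deriv r n t = binom_scale r n *
     (real r * t ^ (r - 1) * (1 - t / n) ^ (n - r) - t ^ r * (real (n - r) / n) * (1 - t / n) ^ (n - r - 1))"

definition poisson_profile_deriv :: "nat \<Rightarrow> real \<Rightarrow> real" where
  "poisson_profile_deriv r t = (real r * t ^ (r - 1) - t ^ r) * exp (- t) / fact r"

lemma binom_scale_tendsto: "(\<lambda>n. binom_scale r n) \<longlonglongrightarrow> 1 / fact r"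
  unfolding binom_scale_def
proof (rule LIMSEQ_offset[where k = r])
  have "(\<lambda>m. real ((r + m) choose m) / real (m ^ r) * (real m / real (m + r)) ^ r) \<longlonglongrightarrow> 1 / fact r * 1 ^ r"
    by (intro tendsto_intros fact_binomial_limit) real_asymp
  then have lim: "(\<lambda>m. real ((r + m) choose m) / real (m ^ r) * (real m / real (m + r)) ^ r) \<longlonglongrightarrow> 1 / fact r"
    by simp
  show "(\<lambda>m. real ((m + r) choose r) / real (m + r) ^ r) \<longlonglongrightarrow> 1 / fact r"
  proof (rule Lim_transform_eventually[OF lim])
    show "\<forall>\<^sub>F m in sequentially. real ((r + m) choose m) / real (m ^ r) * (real m / real (m + r)) ^ r =
       real ((m + r) choose r) / real (m + r) ^ r"
      using eventually_gt_at_top[of "0::nat"]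
    proof eventually_elim
      case (elim m)
      have "(r + m) choose m = (m + r) choose r"
        by (subst binomial_symmetric[of m "r + m"]) (auto simp: add.commute)
      then show ?case using elim by (simp add: power_divide field_simps)
    qed
  qed
qed

lemma binom_scale_nonneg: "0 \<le> binom_scale r n"
  by (simp add: binom_scale_def)

lemma binom_scale_le_1: "binom_scale r n \<le> 1"
proof (cases "n = 0")
  case True
  then show ?thesis by (cases r) (auto simp: binom_scale_def)
next
  case False
  have "n choose r \<le> n ^ r"
    by (cases "r \<le> n") (simp_all add: binomial_le_pow binomial_eq_0)
  then have "real (n choose r) \<le> real n ^ r"
    by (simp flip: of_nat_power)
  then show ?thesis using False by (simp add: binom_scale_def)
qed

lemma tendsto_one_minus_over_n_power: "(\<lambda>n. (1 - t / real n) ^ (n - k)) \<longlonglongrightarrow> exp (- t)"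
proof -
  have "(\<lambda>n. (1 + (- t) / real n) ^ n / (1 - t / real n) ^ k) \<longlonglongrightarrow> exp (- t) / (1 - 0) ^ k"
    by (intro tendsto_intros tendsto_exp_limit_sequentially lim_const_over_n) simp
  then have lim: "(\<lambda>n. (1 - t / real n) ^ n / (1 - t / real n) ^ k) \<longlonglongrightarrow> exp (- t)"
    by simp
  obtain N :: nat where N: "\<bar>t\<bar> < N"
    using reals_Archimedean2 by blast
  show ?thesis
  proof (rule Lim_transform_eventually[OF lim])
    show "\<forall>\<^sub>F n in sequentially. (1 - t / real n) ^ n / (1 - t / real n) ^ k = (1 - t / real n) ^ (n - k)"
      using eventually_ge_at_top[of "max k (N + 1)"]
    proof eventually_elim
      case (elim n)
      then have "t < real n" using N by linarith
      then have "t / real n < 1" by (simp add: divide_less_eq)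
      then have ne: "1 - t / real n \<noteq> 0" by linarith
      have "(1 - t / real n) ^ n = (1 - t / real n) ^ (n - k) * (1 - t / real n) ^ k"
        using elim by (simp flip: power_add)
      then show ?case
        by (simp only: nonzero_mult_div_cancel_right[OF power_not_zero[OF ne]])
    qed
  qed
qed

lemma binom_profile_deriv_tendsto: "(\<lambda>n. binom_profile_deriv r n t) \<longlonglongrightarrow> poisson_profile_deriv r t"
proof -
  have q: "(\<lambda>n. real (n - r) / real n) \<longlonglongrightarrow> 1"
  proof (rule Lim_transform_eventually)
    show "(\<lambda>n. 1 - real r / real n) \<longlonglongrightarrow> 1" by real_asymp
    show "\<forall>\<^sub>F n in sequentially. 1 - real r / real n = real (n - r) / real n"
      using eventually_ge_at_top[of "r + 1"] by eventually_elim (auto simp: of_nat_diff field_simps)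
  qed
  have "(\<lambda>n. binom_profile_deriv r n t) \<longlonglongrightarrow>
      1 / fact r * (real r * t ^ (r - 1) * exp (- t) - t ^ r * 1 * exp (- t))"
    unfolding binom_profile_deriv_def
    using tendsto_one_minus_over_n_power[of t r] tendsto_one_minus_over_n_power[of t "r + 1"]
    by (intro tendsto_intros binom_scale_tendsto q) (simp_all add: diff_diff_add)
  then show ?thesis by (simp add: poisson_profile_deriv_def field_simps)
qed

lemma has_real_derivative_binom_profile:
  assumes "r < n"
  shows "(binom_profile r n has_real_derivative binom_profile_deriv r n t) (at t)"
proof -
  have "(binom_profile r n has_real_derivative binom_scale r n *
      (real r * t ^ (r - 1) * (1 - t / n) ^ (n - r) + t ^ r * (real (n - r) * (1 - t / n) ^ (n - r - 1) * (0 - 1 / n)))) (at t)"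
    unfolding binom_profile_def using assms
    by (auto intro!: derivative_eq_intros simp: algebra_simps; simp add: field_simps)
  then show ?thesis unfolding binom_profile_deriv_def by (simp add: algebra_simps)
qed

lemma binom_profile_at_scaled:
  assumes "0 < n"
  shows "binom_profile r n (real n * x) = real (n choose r) * x ^ r * (1 - x) ^ (n - r)"
  using assms by (simp add: binom_profile_def binom_scale_def power_mult_distrib)

lemma isCont_binom_profile_deriv: "0 < n \<Longrightarrow> isCont (binom_profile_deriv r n) t"
  unfolding binom_profile_deriv_def by (intro continuous_intros) auto

lemma borel_measurable_binom_profile_deriv: "0 < n \<Longrightarrow> binom_profile_deriv r n \<in> borel_measurable borel"
  by (rule borel_measurable_continuous_onI) (simp add: continuous_at_imp_continuous_on isCont_binom_profile_deriv)

lemma one_minus_power_le_exp: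
  assumes "0 \<le> y" "y \<le> 1"
  shows "(1 - y) ^ m \<le> exp (- y * real m)"
proof -
  have "(1 - y) ^ m \<le> exp (- y) ^ m"
    using assms by (intro power_mono) (auto simp: exp_ge_add_one_self[of "- y", simplified])
  also have "\<dots> = exp (- y * real m)"
    by (simp add: exp_of_nat_mult[symmetric] mult.commute)
  finally show ?thesis .
qed

text \<open>Uniform in \<open>n\<close>: the factor \<open>(1 - t/n)\<^sup>n\<^sup>-\<^sup>r\<^sup>-\<^sup>1\<close> is at most \<open>e\<^sup>-\<^sup>t\<^sup>/\<^sup>2\<close> once \<open>n \<ge> 2(r+1)\<close>.\<close>
lemma abs_binom_profile_deriv_le:
  assumes "0 < t" "t \<le> real n" "2 * (real r + 1) \<le> real n"
  shows "\<bar>binom_profile_deriv r n t\<bar> \<le> (real r * t ^ (r - 1) + t ^ r) * exp (- t / 2)"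
proof -
  define y where "y = t / real n"
  have n0: "real n > 0" using assms by simp
  have y: "0 < y" "y \<le> 1" using assms n0 by (auto simp: y_def field_simps)
  have e1: "(1 - y) ^ (n - r - 1) \<le> exp (- t / 2)"
  proof -
    have "t * (2 + 2 * real r) \<le> t * real n"
      using assms by (intro mult_left_mono) auto
    then have "t / 2 \<le> y * real (n - r - 1)"
      using assms n0 by (simp add: of_nat_diff y_def field_simps)
    then have "exp (- y * real (n - r - 1)) \<le> exp (- t / 2)" by simp
    with one_minus_power_le_exp[OF less_imp_le[OF y(1)] y(2)] show ?thesis
      by (rule order_trans)
  qed
  have "(1 - y) ^ (n - r) \<le> (1 - y) ^ (n - r - 1)"
    using y by (intro power_decreasing) auto
  with e1 have e0: "(1 - y) ^ (n - r) \<le> exp (- t / 2)" by linarith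
  have q: "0 \<le> real (n - r) / real n" "real (n - r) / real n \<le> 1" using n0 by auto
  define a where "a = real r * t ^ (r - 1) * (1 - y) ^ (n - r)"
  define b where "b = t ^ r * (real (n - r) / n) * (1 - y) ^ (n - r - 1)"
  have "0 \<le> a" "a \<le> real r * t ^ (r - 1) * exp (- t / 2)"
    unfolding a_def using e0 y assms by (auto intro!: mult_left_mono)
  moreover have "0 \<le> b" "b \<le> t ^ r * 1 * exp (- t / 2)"
    unfolding b_def using e1 q y assms by (simp, intro mult_mono) auto
  ultimately have "\<bar>a - b\<bar> \<le> (real r * t ^ (r - 1) + t ^ r) * exp (- t / 2)"
    by (simp add: algebra_simps abs_le_iff)
  moreover have "\<bar>binom_profile_deriv r n t\<bar> = binom_scale r n * \<bar>a - b\<bar>"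
    by (simp add: binom_profile_deriv_def y_def a_def b_def abs_mult binom_scale_nonneg)
  ultimately show ?thesis
    using binom_scale_le_1[of r n] binom_scale_nonneg[of r n] mult_mono[of "binom_scale r n" 1]
    by fastforce
qed

section \<open>Gamma integrals\<close>

lemma has_bochner_integral_Gamma_real:
  fixes s :: real
  assumes "0 < s"
  shows "has_bochner_integral lborel (\<lambda>t. indicator {0<..} t * t powr (s - 1) * exp (- t)) (Gamma s)"
proof -
  have eq: "indicator {0..} t * (t powr (s - 1) / exp t) = indicator {0<..} t * t powr (s - 1) * exp (- t)"
    for t :: real
    by (cases "t > 0"; cases "t = 0") (auto simp: indicator_def exp_minus field_simps)
  have "integral\<^sup>N lborel (\<lambda>t. ennreal (indicator {0..} t * (t powr (s - 1) / exp t))) = ennreal (Gamma s)"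
    by (rule nn_integral_has_integral_lebesgue[OF _ Gamma_integral_real[OF assms]]) simp
  then have "integral\<^sup>N lborel (\<lambda>t. ennreal (indicator {0<..} t * t powr (s - 1) * exp (- t))) = ennreal (Gamma s)"
    by (simp only: eq)
  then have "integrable lborel (\<lambda>t. indicator {0<..} t * t powr (s - 1) * exp (- t)) \<and>
      (\<integral>t. indicator {0<..} t * t powr (s - 1) * exp (- t) \<partial>lborel) = Gamma s"
    using assms by (subst nn_integral_eq_integrable[symmetric]) (auto intro!: Gamma_real_pos)
  then show ?thesis by (simp add: has_bochner_integral_iff)
qed

lemma integrable_powr_exp_half:
  assumes "- 1 < e"
  shows "integrable lborel (\<lambda>t::real. indicator {0<..} t * t powr e * exp (- t / 2))"
proof -
  have "integrable lborel (\<lambda>t. indicator {0<..} t * t powr e * exp (- t))"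
    using has_bochner_integral_Gamma_real[of "e + 1"] assms by (simp add: has_bochner_integral_iff)
  from lborel_integrable_real_affine[OF this, of "1 / 2" 0]
  have "integrable lborel (\<lambda>x. 2 powr e * (indicator {0<..} (x / 2) * (x / 2) powr e * exp (- (x / 2))))"
    by (intro integrable_mult_right) simp
  also have "(\<lambda>x. 2 powr e * (indicator {0<..} (x / 2) * (x / 2) powr e * exp (- (x / 2)))) =
      (\<lambda>t. indicator {0<..} t * t powr e * exp (- t / 2))"
    by (auto simp: fun_eq_iff indicator_def powr_divide)
  finally show ?thesis .
qed

text \<open>Integrating \<open>(t\<^sup>r e\<^sup>-\<^sup>t)' t\<^sup>-\<^sup>\<alpha>\<close> termwise gives \<open>r \<Gamma>(r-\<alpha>) - \<Gamma>(r-\<alpha>+1)\<close>.\<close>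
lemma has_bochner_integral_poisson_profile_deriv_powr:
  assumes "0 < \<alpha>" "\<alpha> < 1" "1 \<le> r"
  shows "has_bochner_integral lborel (\<lambda>t. indicator {0<..} t * poisson_profile_deriv r t * t powr (- \<alpha>))
           (\<alpha> * Gamma (real r - \<alpha>) / fact r)"
proof -
  define g where "g s t = indicator {0<..} t * t powr (s - 1) * exp (- t)" for s t :: real
  have g: "has_bochner_integral lborel (g s) (Gamma s)" if "0 < s" for s
    unfolding g_def using that by (rule has_bochner_integral_Gamma_real)
  have "(\<lambda>t. indicator {0<..} t * poisson_profile_deriv r t * t powr (- \<alpha>)) =
      (\<lambda>t. (real r * g (real r - \<alpha>) t - g (real r - \<alpha> + 1) t) / fact r)"
  proof
    fix t :: real
    show "indicator {0<..} t * poisson_profile_deriv r t * t powr (- \<alpha>) =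
        (real r * g (real r - \<alpha>) t - g (real r - \<alpha> + 1) t) / fact r"
    proof (cases "t > 0")
      case True
      have "t ^ (r - 1) * t powr (- \<alpha>) = t powr (real r - \<alpha> - 1)"
        using True assms by (simp add: powr_realpow[symmetric] powr_add[symmetric] of_nat_diff algebra_simps)
      moreover have "t ^ r * t powr (- \<alpha>) = t powr (real r - \<alpha>)"
        using True by (simp add: powr_realpow[symmetric] powr_add[symmetric])
      ultimately show ?thesis
        using True by (simp add: poisson_profile_deriv_def g_def algebra_simps)
    qed (simp add: g_def)
  qed
  moreover have "has_bochner_integral lborel (\<lambda>t. (real r * g (real r - \<alpha>) t - g (real r - \<alpha> + 1) t) / fact r)
      ((real r * Gamma (real r - \<alpha>) - Gamma (real r - \<alpha> + 1)) / fact r)"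
    using assms by (intro has_bochner_integral_divide has_bochner_integral_diff
        has_bochner_integral_mult_right g) auto
  moreover have "Gamma (real r - \<alpha> + 1) = (real r - \<alpha>) * Gamma (real r - \<alpha>)"
    using assms nonpos_Ints_nonpos[of "real r - \<alpha>"] by (intro Gamma_plus1) auto
  then have "(real r * Gamma (real r - \<alpha>) - Gamma (real r - \<alpha> + 1)) / fact r = \<alpha> * Gamma (real r - \<alpha>) / fact r"
    by (simp add: algebra_simps)
  ultimately show ?thesis
    by (simp only:)
qed

section \<open>The tail counting function\<close>

lemma finite_nubar_set:
  fixes p :: "nat \<Rightarrow> real"
  assumes "summable p" "0 < x"
  shows "finite {j. x \<le> p j}"
proof -
  from order_tendstoD(2)[OF summable_LIMSEQ_zero[OF assms(1)] assms(2)]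
  obtain N where "\<And>j. N \<le> j \<Longrightarrow> p j < x"
    by (auto simp: eventually_sequentially)
  then have "{j. x \<le> p j} \<subseteq> {..<N}"
    by (auto simp: not_le[symmetric])
  then show ?thesis by (rule finite_subset) simp
qed

lemma nubar_nonneg: "0 \<le> nubar p x"
  by (simp add: nubar_def)

lemma nubar_antimono:
  assumes "summable p" "0 < x" "x \<le> y"
  shows "nubar p y \<le> nubar p x"
proof -
  have "{j. y \<le> p j} \<subseteq> {j. x \<le> p j}" using assms by auto
  then show ?thesis
    unfolding nubar_def using finite_nubar_set[OF assms(1,2)] by (simp add: card_mono)
qed

lemma nubar_eq_0_if_gt_1:
  assumes "\<And>j. p j \<le> 1" "1 < x"
  shows "nubar p x = 0"
proof -
  have "{j. x \<le> p j} = {}"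
    using assms by (auto simp: not_le intro: le_less_trans)
  then show ?thesis by (simp add: nubar_def)
qed

text \<open>For \<open>x \<le> 0\<close> the set \<open>{j. x \<le> p j}\<close> is all of \<open>\<nat>\<close>, whose \<open>card\<close> is \<open>0\<close>.\<close>
lemma nubar_eq_0_if_nonpos:
  assumes "\<And>j. 0 \<le> p j" "x \<le> 0"
  shows "nubar p x = 0"
proof -
  have "{j. x \<le> p j} = UNIV"
    using assms by (auto intro: order_trans)
  then show ?thesis by (simp add: nubar_def)
qed

lemma borel_measurable_nubar_scaled:
  assumes "summable p" "\<And>j. 0 \<le> p j" "0 < c"
  shows "(\<lambda>t. nubar p (t / c)) \<in> borel_measurable borel"
proof -
  have "(\<lambda>t. - nubar p (t / c)) \<in> borel_measurable borel"
  proof (rule borel_measurable_piecewise_mono[of "{{..0}, {0<..}}"])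
    show "mono_on I (\<lambda>t. - nubar p (t / c))" if "I \<in> {{..0}, {0<..}}" for I
    proof (cases "I = {..0}")
      case True
      show ?thesis unfolding True
        by (rule mono_onI) (use assms in \<open>auto simp: nubar_eq_0_if_nonpos divide_nonpos_pos\<close>)
    next
      case False
      then have "I = {0<..}" using that by auto
      then show ?thesis
        using assms(3) by (auto intro!: mono_onI nubar_antimono assms(1) divide_right_mono)
    qed
  qed auto
  from borel_measurable_uminus[OF this] show ?thesis by simp
qed

text \<open>Potter-type bound: one doubling step \<open>N(x/2) \<le> 2\<^sup>\<beta> N(x)\<close> below \<open>x\<^sub>0\<close> iterates,
  via monotonicity, to every scale \<open>s \<le> 1\<close>.\<close>
lemma potter_bound:
  fixes N :: "real \<Rightarrow> real" and \<beta> x\<^sub>0 :: real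
  assumes anti: "\<And>x y. 0 < x \<Longrightarrow> x \<le> y \<Longrightarrow> N y \<le> N x"
    and nonneg: "\<And>x. 0 \<le> N x"
    and \<beta>: "0 \<le> \<beta>"
    and doubling: "\<And>x. 0 < x \<Longrightarrow> x \<le> x\<^sub>0 \<Longrightarrow> N (x / 2) \<le> 2 powr \<beta> * N x"
    and x: "0 < x" "x \<le> x\<^sub>0" and s: "0 < s" "s \<le> 1"
  shows "N (s * x) \<le> 2 powr \<beta> * s powr (- \<beta>) * N x"
proof -
  have "\<forall>x s. 0 < x \<longrightarrow> x \<le> x\<^sub>0 \<longrightarrow> (1 / 2) ^ k \<le> s \<longrightarrow> s \<le> 1 \<longrightarrow>
      N (s * x) \<le> 2 powr \<beta> * s powr (- \<beta>) * N x" for k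
  proof (induction k)
    case 0
    have "1 \<le> 2 powr \<beta>" using \<beta> by (intro ge_one_powr_ge_zero) auto
    then have "N x \<le> 2 powr \<beta> * N x" for x
      using nonneg[of x] mult_right_mono[of 1 "2 powr \<beta>" "N x"] by simp
    then show ?case by auto
  next
    case (Suc k)
    show ?case
    proof (intro allI impI)
      fix x s :: real
      assume a: "0 < x" "x \<le> x\<^sub>0" "(1 / 2) ^ Suc k \<le> s" "s \<le> 1"
      have s0: "0 < s" using a(3) by (rule less_le_trans[rotated]) simp
      show "N (s * x) \<le> 2 powr \<beta> * s powr (- \<beta>) * N x"
      proof (cases "1 / 2 \<le> s")
        case True
        have "1 \<le> s powr (- \<beta>)"
          using s0 a(4) \<beta> by (simp add: powr_minus powr_le1 field_simps)
        have "N (s * x) \<le> N (x / 2)" using True a by (intro anti) auto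
        also have "\<dots> \<le> 2 powr \<beta> * N x" using doubling a by auto
        also have "\<dots> \<le> 2 powr \<beta> * s powr (- \<beta>) * N x"
          using \<open>1 \<le> s powr (- \<beta>)\<close> nonneg[of x] by (intro mult_right_mono) (auto simp: mult_le_cancel_left1)
        finally show ?thesis .
      next
        case False
        have "N (s * x) = N ((2 * s) * (x / 2))" by simp
        also have "\<dots> \<le> 2 powr \<beta> * (2 * s) powr (- \<beta>) * N (x / 2)"
          using Suc.IH[rule_format, of "x / 2" "2 * s"] a False by simp
        also have "\<dots> \<le> 2 powr \<beta> * (2 * s) powr (- \<beta>) * (2 powr \<beta> * N x)"
          using doubling a by (intro mult_left_mono) auto
        also have "\<dots> = 2 powr \<beta> * s powr (- \<beta>) * N x"
          using s0 by (simp add: powr_mult powr_minus field_simps)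
        finally show ?thesis .
      qed
    qed
  qed
  moreover obtain k where "(1 / 2 :: real) ^ k < s"
    using real_arch_pow_inv[OF s(1), of "1 / 2"] by auto
  ultimately show ?thesis using x s by (meson less_imp_le)
qed

section \<open>Regular variation\<close>

lemma slowly_varying_ratio_tendsto:
  assumes "slowly_varying L" "0 < c" "filterlim f at_top F"
  shows "((\<lambda>x. L (c * f x) / L (f x)) \<longlongrightarrow> 1) F"
  using filterlim_compose[OF _ assms(3), of "\<lambda>t. L (c * t) / L t"] assms(1,2)
  unfolding slowly_varying_def by auto

lemma slowly_varying_eventually_nonzero:
  assumes "slowly_varying L"
  shows "eventually (\<lambda>t. L t \<noteq> 0) at_top"
proof -
  have "((\<lambda>t. L (2 * t) / L t) \<longlongrightarrow> 1) at_top"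
    using assms unfolding slowly_varying_def by auto
  from order_tendstoD(1)[OF this, of "1 / 2"]
  have "eventually (\<lambda>t. 1 / 2 < L (2 * t) / L t) at_top" by simp
  then show ?thesis by eventually_elim auto
qed

lemma filterlim_const_mult_at_right_0:
  fixes c :: real
  assumes "0 < c" "filterlim f (at_right 0) F"
  shows "filterlim (\<lambda>y. c * f y) (at_right 0) F"
proof -
  from assms(2) have "eventually (\<lambda>y. f y \<in> {0<..} \<and> f y \<noteq> 0) F" "(f \<longlongrightarrow> 0) F"
    by (simp_all add: filterlim_at)
  moreover from this(2) have "((\<lambda>y. c * f y) \<longlongrightarrow> 0) F"
    by (rule tendsto_mult_right_zero)
  ultimately show ?thesis
    using assms(1) by (auto simp: filterlim_at elim: eventually_mono)
qed

lemma filterlim_inverse_real_at_right_0: "filterlim (\<lambda>n::nat. 1 / real n) (at_right 0) sequentially"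
proof -
  have "eventually (\<lambda>n::nat. 1 / real n \<in> {0<..} \<and> 1 / real n \<noteq> 0) sequentially"
    using eventually_gt_at_top[of "0::nat"] by eventually_elim auto
  then show ?thesis
    using lim_const_over_n[of 1] by (simp add: filterlim_at)
qed

definition rv_profile :: "real \<Rightarrow> (real \<Rightarrow> real) \<Rightarrow> real \<Rightarrow> real" where
  "rv_profile \<alpha> L x = x powr (- \<alpha>) * L (1 / x)"

context
  fixes p :: "nat \<Rightarrow> real" and \<alpha> :: real and L :: "real \<Rightarrow> real"
  assumes rv: "regularly_varying p \<alpha> L"
begin

lemma nubar_asymp_equiv_rv_profile: "nubar p \<sim>[at_right 0] rv_profile \<alpha> L"
  using rv by (simp add: regularly_varying_def rv_profile_def[abs_def])

lemma eventually_nubar_pos: "eventually (\<lambda>x. 0 < nubar p x) (at_right 0)"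
proof -
  have "eventually (\<lambda>x. L (1 / x) \<noteq> 0) (at_right 0)"
    using filterlim_iff[THEN iffD1, OF filterlim_inverse_at_top_right, rule_format,
        OF slowly_varying_eventually_nonzero] rv
    by (simp add: regularly_varying_def inverse_eq_divide)
  moreover have "eventually (\<lambda>x::real. 0 < x) (at_right 0)"
    by (simp add: eventually_at_right_less)
  moreover note asymp_equiv_eventually_zeros[OF nubar_asymp_equiv_rv_profile]
  ultimately show ?thesis
  proof eventually_elim
    case (elim x)
    then have "nubar p x \<noteq> 0" by (simp add: rv_profile_def)
    with nubar_nonneg[of p x] show ?case by simp
  qed
qed

lemma nubar_ratio_tendsto:
  assumes "0 < c" "filterlim f (at_right 0) F"
  shows "((\<lambda>y. nubar p (c * f y) / nubar p (f y)) \<longlongrightarrow> c powr (- \<alpha>)) F"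
proof -
  have sv: "slowly_varying L" using rv by (simp add: regularly_varying_def)
  have "(\<lambda>y. nubar p (c * f y) / nubar p (f y)) \<sim>[F] (\<lambda>y. rv_profile \<alpha> L (c * f y) / rv_profile \<alpha> L (f y))"
    by (intro asymp_equiv_divide asymp_equiv_compose'[OF nubar_asymp_equiv_rv_profile]
        filterlim_const_mult_at_right_0 assms)
  moreover have "((\<lambda>y. rv_profile \<alpha> L (c * f y) / rv_profile \<alpha> L (f y)) \<longlongrightarrow> c powr (- \<alpha>) * 1) F"
  proof (rule Lim_transform_eventually)
    show "((\<lambda>y. c powr (- \<alpha>) * (L ((1 / c) * (1 / f y)) / L (1 / f y))) \<longlongrightarrow> c powr (- \<alpha>) * 1) F"
      using assms
      by (intro tendsto_mult tendsto_const slowly_varying_ratio_tendsto[OF sv]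
          filterlim_compose[OF filterlim_inverse_at_top_right[unfolded inverse_eq_divide]]) simp_all
    have "eventually (\<lambda>y. 0 < f y) F"
      using assms(2) by (auto simp: filterlim_at elim: eventually_mono)
    then show "eventually (\<lambda>y. c powr (- \<alpha>) * (L ((1 / c) * (1 / f y)) / L (1 / f y)) =
        rv_profile \<alpha> L (c * f y) / rv_profile \<alpha> L (f y)) F"
      by eventually_elim (use assms(1) in \<open>simp add: rv_profile_def powr_mult field_simps\<close>)
  qed
  ultimately show ?thesis
    using asymp_equiv_tendsto_transfer[OF asymp_equiv_symI] by fastforce
qed

lemma nubar_half_ratio_tendsto: "((\<lambda>x. nubar p (x / 2) / nubar p x) \<longlongrightarrow> 2 powr \<alpha>) (at_right 0)"
  using nubar_ratio_tendsto[of "1 / 2" "\<lambda>x. x" "at_right 0"]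
  by (simp add: filterlim_ident powr_divide powr_minus_divide)

lemma nubar_over_n_ratio_tendsto:
  assumes "0 < t"
  shows "(\<lambda>n. nubar p (t / real n) / nubar p (1 / real n)) \<longlonglongrightarrow> t powr (- \<alpha>)"
  using nubar_ratio_tendsto[OF assms filterlim_inverse_real_at_right_0] by simp

lemma nubar_over_n_asymp_equiv: "(\<lambda>n. nubar p (1 / real n)) \<sim>[sequentially] (\<lambda>n. real n powr \<alpha> * L (real n))"
proof -
  have "(\<lambda>n. nubar p (1 / real n)) \<sim>[sequentially] (\<lambda>n. rv_profile \<alpha> L (1 / real n))"
    by (rule asymp_equiv_compose'[OF nubar_asymp_equiv_rv_profile filterlim_inverse_real_at_right_0])
  moreover have "eventually (\<lambda>n. rv_profile \<alpha> L (1 / real n) = real n powr \<alpha> * L (real n)) sequentially"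
    using eventually_gt_at_top[of "0::nat"]
    by eventually_elim (simp add: rv_profile_def powr_divide powr_minus)
  ultimately show ?thesis
    using asymp_equiv_transfer by fastforce
qed


lemma eventually_nubar_over_n_le:
  assumes summable: "summable p" and \<beta>: "\<alpha> < \<beta>" "0 \<le> \<beta>"
  shows "eventually (\<lambda>n. \<forall>t>0. nubar p (t / real n) \<le> (1 + 2 powr \<beta> * t powr (- \<beta>)) * nubar p (1 / real n))
           sequentially"
proof -
  have "2 powr \<alpha> < 2 powr \<beta>" using \<beta> by (intro powr_less_mono) auto
  from order_tendstoD(2)[OF nubar_half_ratio_tendsto this]
  have "eventually (\<lambda>x. nubar p (x / 2) / nubar p x < 2 powr \<beta>) (at_right 0)" .
  then have "eventually (\<lambda>x. nubar p (x / 2) \<le> 2 powr \<beta> * nubar p x) (at_right 0)"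
    using eventually_nubar_pos by eventually_elim (simp add: divide_less_eq)
  then obtain x\<^sub>1 where x\<^sub>1: "0 < x\<^sub>1" "\<And>x. 0 < x \<Longrightarrow> x < x\<^sub>1 \<Longrightarrow> nubar p (x / 2) \<le> 2 powr \<beta> * nubar p x"
    by (auto simp: eventually_at_right_field)
  define x\<^sub>0 where "x\<^sub>0 = x\<^sub>1 / 2"
  have x\<^sub>0: "0 < x\<^sub>0" "\<And>x. 0 < x \<Longrightarrow> x \<le> x\<^sub>0 \<Longrightarrow> nubar p (x / 2) \<le> 2 powr \<beta> * nubar p x"
    using x\<^sub>1 by (auto simp: x\<^sub>0_def)
  have "eventually (\<lambda>n. 1 / real n < x\<^sub>0) sequentially"
    using lim_const_over_n[of 1] x\<^sub>0(1) by (rule order_tendstoD(2))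
  moreover have "eventually (\<lambda>n. 0 < nubar p (1 / real n)) sequentially"
    using filterlim_iff[THEN iffD1, OF filterlim_inverse_real_at_right_0, rule_format, OF eventually_nubar_pos] .
  moreover have "eventually (\<lambda>n. 0 < n) sequentially"
    by (rule eventually_gt_at_top)
  ultimately show ?thesis
  proof eventually_elim
    case (elim n)
    then have n: "0 < real n" by simp
    show ?case
    proof (intro allI impI)
      fix t :: real assume t: "0 < t"
      define bound where "bound = 2 powr \<beta> * t powr (- \<beta>) * nubar p (1 / real n)"
      have "0 \<le> bound" by (simp add: bound_def nubar_nonneg)
      moreover have "nubar p (t / real n) \<le> nubar p (1 / real n) \<or> nubar p (t / real n) \<le> bound"
      proof (cases "1 \<le> t")
        case True
        then show ?thesis using n by (auto intro!: nubar_antimono summable divide_right_mono)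
      next
        case False
        have "nubar p (t * (1 / real n)) \<le> bound"
          unfolding bound_def
          by (rule potter_bound[where N = "nubar p", OF nubar_antimono[OF summable] nubar_nonneg \<beta>(2) x\<^sub>0(2)])
             (use elim(1) n t False in auto)
        then show ?thesis by simp
      qed
      ultimately show "nubar p (t / real n) \<le> (1 + 2 powr \<beta> * t powr (- \<beta>)) * nubar p (1 / real n)"
        unfolding distrib_right mult_1 bound_def[symmetric] using nubar_nonneg[of p "1 / real n"] by auto
    qed
  qed
qed

end

section \<open>Expected frequency counts\<close>

lemma suminf_indicator_ennreal:
  fixes S :: "nat set"
  shows "(\<Sum>i. indicator S i :: ennreal) = (if finite S then of_nat (card S) else \<infinity>)"
proof -
  have "(\<Sum>i. indicator S i :: ennreal) = (\<integral>\<^sup>+i. indicator S i \<partial>count_space UNIV)"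
    by (rule nn_integral_count_space_nat[symmetric])
  also have "\<dots> = (if finite S then of_nat (card S) else \<infinity>)"
    by (simp add: emeasure_count_space)
  finally show ?thesis .
qed

text \<open>If infinitely many events occur, \<open>card\<close> gives the junk value \<open>0\<close>, but this
  happens only on a null set.\<close>
lemma sums_integral_card_events:
  fixes A :: "nat \<Rightarrow> 'a set"
  assumes M: "finite_measure M" and A: "\<And>j. A j \<in> sets M"
    and summable: "summable (\<lambda>j. measure M (A j))"
  shows "(\<lambda>j. measure M (A j)) sums (\<integral>\<omega>. real (card {j. \<omega> \<in> A j}) \<partial>M)"
proof -
  define F where "F \<omega> = (\<Sum>j. indicator (A j) \<omega> :: ennreal)" for \<omega>
  have F_meas: "F \<in> borel_measurable M"
    unfolding F_def[abs_def] using A by measurable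
  have nn_F: "(\<integral>\<^sup>+\<omega>. F \<omega> \<partial>M) = ennreal (\<Sum>j. measure M (A j))"
  proof -
    have "(\<integral>\<^sup>+\<omega>. F \<omega> \<partial>M) = (\<Sum>j. \<integral>\<^sup>+\<omega>. indicator (A j) \<omega> \<partial>M)"
      unfolding F_def using A by (intro nn_integral_suminf) simp
    also have "\<dots> = (\<Sum>j. ennreal (measure M (A j)))"
      using A by (simp add: finite_measure.emeasure_eq_measure[OF M])
    also have "\<dots> = ennreal (\<Sum>j. measure M (A j))"
      using summable by (intro suminf_ennreal2) auto
    finally show ?thesis .
  qed
  have card_eq: "real (card {j. \<omega> \<in> A j}) = enn2real (F \<omega>)" for \<omega>
    using suminf_indicator_ennreal[of "{j. \<omega> \<in> A j}"]
    by (simp add: F_def indicator_def)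
  have "(\<integral>\<omega>. real (card {j. \<omega> \<in> A j}) \<partial>M) = enn2real (\<integral>\<^sup>+\<omega>. ennreal (enn2real (F \<omega>)) \<partial>M)"
    unfolding card_eq using F_meas by (intro integral_eq_nn_integral) auto
  also have "(\<integral>\<^sup>+\<omega>. ennreal (enn2real (F \<omega>)) \<partial>M) = (\<integral>\<^sup>+\<omega>. F \<omega> \<partial>M)"
  proof (rule nn_integral_cong_AE)
    have "AE \<omega> in M. F \<omega> \<noteq> \<infinity>"
      using F_meas by (rule nn_integral_PInf_AE) (simp add: nn_F)
    then show "AE \<omega> in M. ennreal (enn2real (F \<omega>)) = F \<omega>"
      by eventually_elim (simp add: less_top)
  qed
  finally have "(\<integral>\<omega>. real (card {j. \<omega> \<in> A j}) \<partial>M) = (\<Sum>j. measure M (A j))"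
    using suminf_nonneg[OF summable] by (simp add: nn_F)
  with summable_sums[OF summable] show ?thesis by simp
qed

lemma prob_space_feature_space: "prob_space (feature_space p)"
  unfolding feature_space_def by (rule prob_space_PiM) (simp add: prob_space_measure_pmf)

lemma prod_lessThan_if_mem:
  assumes "S \<subseteq> {..<n}"
  shows "(\<Prod>i<n. if i \<in> S then a else b) = a ^ card S * (b :: real) ^ (n - card S)"
proof -
  have "(\<Prod>i<n. if i \<in> S then a else b) = (\<Prod>i\<in>{..<n} \<inter> {i. i \<in> S}. a) * (\<Prod>i\<in>{..<n} \<inter> - {i. i \<in> S}. b)"
    by (rule prod.If_cases) simp
  moreover have "{..<n} \<inter> {i. i \<in> S} = S" "{..<n} \<inter> - {i. i \<in> S} = {..<n} - S"
    using assms by auto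
  moreover have "card ({..<n} - S) = n - card S"
    using assms by (simp add: card_Diff_subset finite_subset)
  ultimately show ?thesis by simp
qed

lemma emeasure_feature_space_pattern:
  fixes p :: "nat \<Rightarrow> real"
  assumes p01: "\<And>j. 0 \<le> p j \<and> p j \<le> 1" and S: "S \<subseteq> {..<n}"
  shows "{\<omega>. \<forall>i<n. \<omega> (i, j) = (i \<in> S)} \<in> sets (feature_space p)"
    and "emeasure (feature_space p) {\<omega>. \<forall>i<n. \<omega> (i, j) = (i \<in> S)} =
           ennreal (p j ^ card S * (1 - p j) ^ (n - card S))"
proof -
  define M where "M ij = measure_pmf (bernoulli_pmf (p (snd ij)))" for ij :: "nat \<times> nat"
  define J where "J = {..<n} \<times> {j}"
  have fs: "feature_space p = PiM UNIV M"
    by (simp add: feature_space_def M_def[abs_def])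
  have fin: "finite J" by (simp add: J_def)
  have C: "{\<omega>. \<forall>i<n. \<omega> (i, j) = (i \<in> S)} = prod_emb UNIV M J (PiE J (\<lambda>k. {fst k \<in> S}))"
    by (auto simp: prod_emb_def space_PiM M_def J_def PiE_def Pi_def extensional_def restrict_def)
  show "{\<omega>. \<forall>i<n. \<omega> (i, j) = (i \<in> S)} \<in> sets (feature_space p)"
    unfolding C fs by (rule sets_PiM_I) (auto simp: fin M_def)
  have pj: "0 \<le> p j" "p j \<le> 1" using p01 by auto
  have "emeasure (PiM UNIV M) (prod_emb UNIV M J (PiE J (\<lambda>k. {fst k \<in> S}))) =
      (\<Prod>k\<in>J. emeasure (M k) {fst k \<in> S})"
    by (rule emeasure_PiM_emb) (auto simp: M_def prob_space_measure_pmf fin)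
  also have "\<dots> = (\<Prod>k\<in>J. ennreal (if fst k \<in> S then p j else 1 - p j))"
    using pj by (intro prod.cong refl) (auto simp: M_def J_def emeasure_pmf_single)
  also have "\<dots> = ennreal (\<Prod>k\<in>J. if fst k \<in> S then p j else 1 - p j)"
    using pj by (intro prod_ennreal) auto
  also have "(\<Prod>k\<in>J. if fst k \<in> S then p j else 1 - p j) = (\<Prod>i<n. if i \<in> S then p j else 1 - p j)"
  proof -
    have "J = (\<lambda>i. (i, j)) ` {..<n}" "inj_on (\<lambda>i. (i, j)) {..<n}"
      by (auto simp: J_def inj_on_def)
    then show ?thesis by (simp add: prod.reindex)
  qed
  finally show "emeasure (feature_space p) {\<omega>. \<forall>i<n. \<omega> (i, j) = (i \<in> S)} =
      ennreal (p j ^ card S * (1 - p j) ^ (n - card S))"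
    unfolding C fs prod_lessThan_if_mem[OF S] .
qed

lemma Xcount_eq_Union_patterns:
  "{\<omega>. Xcount n j \<omega> = r} = (\<Union>S\<in>{S. S \<subseteq> {..<n} \<and> card S = r}. {\<omega>. \<forall>i<n. \<omega> (i, j) = (i \<in> S)})"
proof (intro set_eqI iffI)
  fix \<omega> assume "\<omega> \<in> {\<omega>. Xcount n j \<omega> = r}"
  then show "\<omega> \<in> (\<Union>S\<in>{S. S \<subseteq> {..<n} \<and> card S = r}. {\<omega>. \<forall>i<n. \<omega> (i, j) = (i \<in> S)})"
    by (intro UN_I[of "{i. i < n \<and> \<omega> (i, j)}"]) (auto simp: Xcount_def)
next
  fix \<omega> assume "\<omega> \<in> (\<Union>S\<in>{S. S \<subseteq> {..<n} \<and> card S = r}. {\<omega>. \<forall>i<n. \<omega> (i, j) = (i \<in> S)})"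
  then obtain S where "S \<subseteq> {..<n}" "card S = r" "\<forall>i<n. \<omega> (i, j) = (i \<in> S)" by blast
  moreover from this have "{i. i < n \<and> \<omega> (i, j)} = S" by auto
  ultimately show "\<omega> \<in> {\<omega>. Xcount n j \<omega> = r}" by (simp add: Xcount_def)
qed

lemma measure_Xcount_eq:
  fixes p :: "nat \<Rightarrow> real"
  assumes p01: "\<And>j. 0 \<le> p j \<and> p j \<le> 1"
  shows "{\<omega>. Xcount n j \<omega> = r} \<in> sets (feature_space p)"
    and "measure (feature_space p) {\<omega>. Xcount n j \<omega> = r} = real (n choose r) * p j ^ r * (1 - p j) ^ (n - r)"
proof -
  define SS where "SS = {S. S \<subseteq> {..<n} \<and> card S = r}"
  define C where "C S = {\<omega>. \<forall>i<n. \<omega> (i, j) = (i \<in> S)}" for S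
  have fin: "finite SS"
    unfolding SS_def by (rule finite_subset[of _ "Pow {..<n}"]) auto
  have C: "C S \<in> sets (feature_space p)"
    "emeasure (feature_space p) (C S) = ennreal (p j ^ r * (1 - p j) ^ (n - r))" if "S \<in> SS" for S
    using emeasure_feature_space_pattern[OF p01, where S = S and n = n and j = j] that by (auto simp: SS_def C_def)
  have disj: "disjoint_family_on C SS"
    by (auto simp: disjoint_family_on_def SS_def C_def subset_eq)
  have eq: "{\<omega>. Xcount n j \<omega> = r} = (\<Union>S\<in>SS. C S)"
    unfolding Xcount_eq_Union_patterns SS_def C_def ..
  show "{\<omega>. Xcount n j \<omega> = r} \<in> sets (feature_space p)"
    unfolding eq using C(1) fin by (intro sets.finite_UN) auto
  have "emeasure (feature_space p) {\<omega>. Xcount n j \<omega> = r} = (\<Sum>S\<in>SS. emeasure (feature_space p) (C S))"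
    unfolding eq using C(1) disj fin by (intro sum_emeasure[symmetric]) auto
  also have "\<dots> = ennreal (real (card SS) * (p j ^ r * (1 - p j) ^ (n - r)))"
    using C(2) p01[of j] by (simp add: ennreal_of_nat_eq_real_of_nat ennreal_mult)
  finally show "measure (feature_space p) {\<omega>. Xcount n j \<omega> = r} = real (n choose r) * p j ^ r * (1 - p j) ^ (n - r)"
    using n_subsets[of "{..<n}" r] p01[of j] by (simp add: measure_def SS_def mult.assoc)
qed

lemma EK_sums:
  fixes p :: "nat \<Rightarrow> real"
  assumes p01: "\<And>j. 0 \<le> p j \<and> p j \<le> 1" and summable: "summable p" and r: "1 \<le> r"
  shows "(\<lambda>j. real (n choose r) * p j ^ r * (1 - p j) ^ (n - r)) sums EK p n r"
proof -
  have "summable (\<lambda>j. real (n choose r) * p j ^ r * (1 - p j) ^ (n - r))"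
  proof (rule summable_comparison_test'[OF summable_mult[OF summable]])
    fix j
    have "p j ^ r \<le> p j ^ 1" "(1 - p j) ^ (n - r) \<le> 1"
      using p01[of j] r power_decreasing[of 1 r "p j"] by (auto intro: power_le_one)
    then have "p j ^ r * (1 - p j) ^ (n - r) \<le> p j"
      using p01[of j] by (metis mult_mono mult_1_right power_one_right zero_le_power diff_ge_0_iff_ge)
    then show "norm (real (n choose r) * p j ^ r * (1 - p j) ^ (n - r)) \<le> real (n choose r) * p j"
      using p01[of j] by (simp add: mult.assoc mult_left_mono)
  qed
  with sums_integral_card_events[OF prob_space.finite_measure[OF prob_space_feature_space[of p]],
      of "\<lambda>j. {\<omega>. Xcount n j \<omega> = r}"]
  show ?thesis
    by (simp add: measure_Xcount_eq[OF p01] EK_def Kcount_def)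
qed

section \<open>The binomial sum as an integral against the tail count\<close>

lemma indicator_sums_nubar:
  fixes p :: "nat \<Rightarrow> real"
  assumes "summable p" "0 < t" "0 < c"
  shows "(\<lambda>j. indicator {0 .. c * p j} t :: real) sums nubar p (t / c)"
proof -
  have "(\<lambda>j. indicator {0 .. c * p j} t :: real) = (\<lambda>j. if j \<in> {j. t / c \<le> p j} then 1 else 0)"
    using assms(2,3) by (auto simp: fun_eq_iff indicator_def field_simps)
  moreover have "finite {j. t / c \<le> p j}"
    using assms by (intro finite_nubar_set) auto
  ultimately show ?thesis
    using sums_If_finite_set[of "{j. t / c \<le> p j}" "\<lambda>_. 1 :: real"] by (simp add: nubar_def)
qed

lemma summable_integral_norm_indicator_Icc:
  fixes p :: "nat \<Rightarrow> real" and h :: "real \<Rightarrow> real"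
  assumes p01: "\<And>j. 0 \<le> p j \<and> p j \<le> 1" and summable: "summable p" and c: "0 < c"
    and h: "\<And>t. isCont h t"
  shows "summable (\<lambda>j. \<integral>t. norm (h t * indicator {0 .. c * p j} t) \<partial>lborel)"
proof -
  have "bounded (h ` {0..c})"
    using h by (intro compact_imp_bounded compact_continuous_image continuous_at_imp_continuous_on) auto
  then obtain B where B: "\<And>t. t \<in> {0..c} \<Longrightarrow> \<bar>h t\<bar> \<le> B"
    unfolding bounded_iff by fastforce
  have "(\<integral>t. norm (h t * indicator {0 .. c * p j} t) \<partial>lborel) \<le> B * c * p j" for j
  proof -
    have "(\<integral>t. norm (h t * indicator {0 .. c * p j} t) \<partial>lborel) \<le> (\<integral>t. B * indicator {0 .. c * p j} t \<partial>lborel)"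
    proof (rule integral_mono)
      show "integrable lborel (\<lambda>t. norm (h t * indicator {0 .. c * p j} t))"
        using h by (intro integrable_norm borel_integrable_atLeastAtMost) auto
      show "integrable lborel (\<lambda>t. B * indicator {0 .. c * p j} t)"
        using borel_integrable_atLeastAtMost[of 0 "c * p j" "\<lambda>_. B"] by simp
      have "c * p j \<le> c" using p01[of j] c by (simp add: mult_left_le)
      then show "norm (h t * indicator {0 .. c * p j} t) \<le> B * indicator {0 .. c * p j} t" for t
        using B[of t] by (auto simp: indicator_def)
    qed
    also have "\<dots> = B * c * p j"
      using p01[of j] c by simp
    finally show ?thesis .
  qed
  then show ?thesis
    by (intro summable_comparison_test'[OF summable_mult[OF summable], where N = 0])
       (simp add: integral_nonneg_AE)
qed

text \<open>Layer-cake formula: the indicators \<open>1{t \<le> c p\<^sub>j}\<close> add up to \<open>\<nu>(t/c)\<close>.\<close>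
lemma sums_integral_indicator_Icc_nubar:
  fixes p :: "nat \<Rightarrow> real" and h :: "real \<Rightarrow> real"
  assumes p01: "\<And>j. 0 \<le> p j \<and> p j \<le> 1" and summable: "summable p" and c: "0 < c"
    and h: "\<And>t. isCont h t"
  shows "(\<lambda>j. \<integral>t. h t * indicator {0 .. c * p j} t \<partial>lborel) sums
           (\<integral>t. indicator {0<..} t * h t * nubar p (t / c) \<partial>lborel)"
proof -
  define f where "f j t = h t * indicator {0 .. c * p j} t" for j t
  have int_f: "integrable lborel (f j)" for j
    unfolding f_def using h by (intro borel_integrable_atLeastAtMost) auto
  note summable_L1 = summable_integral_norm_indicator_Icc[OF p01 summable c h, folded f_def]
  have pointwise: "(\<lambda>j. f j t) sums (indicator {0<..} t * h t * nubar p (t / c))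
      \<and> summable (\<lambda>j. norm (f j t))" if "t \<noteq> 0" for t
  proof (cases "0 < t")
    case True
    have "(\<lambda>j. indicator {0 .. c * p j} t :: real) sums nubar p (t / c)"
      using True c by (intro indicator_sums_nubar summable)
    from sums_mult[OF this, of "h t"] sums_mult[OF this, of "\<bar>h t\<bar>"] show ?thesis
      using True by (auto simp: f_def abs_mult sums_iff)
  next
    case False
    then have "f j t = 0" for j
      using p01[of j] c that by (auto simp: f_def)
    with False show ?thesis by simp
  qed
  have ae_summable: "AE t in lborel. summable (\<lambda>j. norm (f j t))"
    using AE_lborel_singleton[of 0] by eventually_elim (use pointwise in auto)
  have "(\<lambda>j. integral\<^sup>L lborel (f j)) sums (\<integral>t. (\<Sum>j. f j t) \<partial>lborel)"
    using int_f ae_summable summable_L1 by (rule sums_integral)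
  also have "(\<integral>t. (\<Sum>j. f j t) \<partial>lborel) = (\<integral>t. indicator {0<..} t * h t * nubar p (t / c) \<partial>lborel)"
  proof (rule integral_cong_AE)
    show "(\<lambda>t. \<Sum>j. f j t) \<in> borel_measurable lborel"
      using int_f ae_summable summable_L1 by (intro borel_measurable_integrable integrable_suminf)
    have "h \<in> borel_measurable borel"
      using h by (intro borel_measurable_continuous_onI continuous_at_imp_continuous_on) auto
    then show "(\<lambda>t. indicator {0<..} t * h t * nubar p (t / c)) \<in> borel_measurable lborel"
      using borel_measurable_nubar_scaled[OF summable _ c] p01 by simp
    show "AE t in lborel. (\<Sum>j. f j t) = indicator {0<..} t * h t * nubar p (t / c)"
      using AE_lborel_singleton[of 0] by eventually_elim (use pointwise in \<open>auto simp: sums_iff\<close>)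
  qed
  finally show ?thesis
    unfolding f_def .
qed

lemma binomial_terms_sums_integral_nubar:
  fixes p :: "nat \<Rightarrow> real"
  assumes p01: "\<And>j. 0 \<le> p j \<and> p j \<le> 1" and summable: "summable p" and r: "1 \<le> r" "r < n"
  shows "(\<lambda>j. real (n choose r) * p j ^ r * (1 - p j) ^ (n - r)) sums
           (\<integral>t. indicator {0<..} t * binom_profile_deriv r n t * nubar p (t / real n) \<partial>lborel)"
proof -
  have n: "0 < n" "0 < real n" using r by auto
  have "real (n choose r) * p j ^ r * (1 - p j) ^ (n - r) =
      (\<integral>t. binom_profile_deriv r n t * indicator {0 .. real n * p j} t \<partial>lborel)" for j
  proof -
    have "(\<integral>t. binom_profile_deriv r n t * indicator {0 .. real n * p j} t \<partial>lborel) =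
        binom_profile r n (real n * p j) - binom_profile r n 0"
      using p01[of j] n
      by (intro integral_FTC_Icc_real has_real_derivative_binom_profile r isCont_binom_profile_deriv) auto
    moreover have "binom_profile r n 0 = 0"
      using r by (simp add: binom_profile_def)
    ultimately show ?thesis
      by (simp add: binom_profile_at_scaled[OF n(1)])
  qed
  with sums_integral_indicator_Icc_nubar[OF p01 summable n(2) isCont_binom_profile_deriv[OF n(1)]]
  show ?thesis by simp
qed

section \<open>Dominated convergence\<close>

definition potter_majorant :: "nat \<Rightarrow> real \<Rightarrow> real \<Rightarrow> real" where
  "potter_majorant r \<beta> t =
     indicator {0<..} t * ((real r * t ^ (r - 1) + t ^ r) * exp (- t / 2) * (1 + 2 powr \<beta> * t powr (- \<beta>)))"

lemma potter_majorant_nonneg: "0 \<le> potter_majorant r \<beta> t"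
  by (auto simp: potter_majorant_def indicator_def intro!: mult_nonneg_nonneg add_nonneg_nonneg)

lemma integrable_potter_majorant:
  assumes "\<beta> < 1" "1 \<le> r"
  shows "integrable lborel (potter_majorant r \<beta>)"
proof -
  define W where "W e t = indicator {0<..} t * t powr e * exp (- t / 2)" for e t :: real
  have "integrable lborel (\<lambda>t. real r * W (real r - 1) t + W (real r) t
      + 2 powr \<beta> * real r * W (real r - 1 - \<beta>) t + 2 powr \<beta> * W (real r - \<beta>) t)"
    unfolding W_def using assms
    by (intro Bochner_Integration.integrable_add integrable_mult_right integrable_powr_exp_half) auto
  also have "(\<lambda>t. real r * W (real r - 1) t + W (real r) t
      + 2 powr \<beta> * real r * W (real r - 1 - \<beta>) t + 2 powr \<beta> * W (real r - \<beta>) t) = potter_majorant r \<beta>"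
  proof
    fix t :: real
    show "real r * W (real r - 1) t + W (real r) t + 2 powr \<beta> * real r * W (real r - 1 - \<beta>) t
        + 2 powr \<beta> * W (real r - \<beta>) t = potter_majorant r \<beta> t"
    proof (cases "0 < t")
      case True
      have "t ^ (r - 1) = t powr (real r - 1)" "t ^ r = t powr real r"
        using True assms by (simp_all add: powr_realpow[symmetric] of_nat_diff)
      moreover have "t powr (real r - 1 - \<beta>) = t powr (real r - 1) * t powr (- \<beta>)"
        "t powr (real r - \<beta>) = t powr real r * t powr (- \<beta>)"
        using True by (simp_all add: powr_add[symmetric])
      ultimately show ?thesis
        using True by (simp add: W_def potter_majorant_def algebra_simps)
    qed (simp add: W_def potter_majorant_def)
  qed
  finally show ?thesis .
qed

lemma abs_binom_nubar_ratio_le_potter_majorant: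
  fixes p :: "nat \<Rightarrow> real"
  assumes p: "\<And>j. p j \<le> 1" and n: "2 * (real r + 1) \<le> real n"
    and ratio: "\<And>t. 0 < t \<Longrightarrow> nubar p (t / real n) \<le> (1 + 2 powr \<beta> * t powr (- \<beta>)) * nubar p (1 / real n)"
  shows "\<bar>indicator {0<..} t * binom_profile_deriv r n t * (nubar p (t / real n) / nubar p (1 / real n))\<bar>
           \<le> potter_majorant r \<beta> t"
proof (cases "0 < t \<and> t \<le> real n")
  case True
  have R: "0 \<le> nubar p (t / real n) / nubar p (1 / real n)"
    "nubar p (t / real n) / nubar p (1 / real n) \<le> 1 + 2 powr \<beta> * t powr (- \<beta>)"
    using ratio[of t] True nubar_nonneg[of p] by (auto simp: divide_le_eq nubar_def)
  have "\<bar>indicator {0<..} t * binom_profile_deriv r n t * (nubar p (t / real n) / nubar p (1 / real n))\<bar>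
      = \<bar>binom_profile_deriv r n t\<bar> * (nubar p (t / real n) / nubar p (1 / real n))"
    using True nubar_nonneg[of p] by (simp add: abs_mult)
  also have "\<dots> \<le> ((real r * t ^ (r - 1) + t ^ r) * exp (- t / 2)) * (1 + 2 powr \<beta> * t powr (- \<beta>))"
    using abs_binom_profile_deriv_le[of t n r] True n R by (intro mult_mono) auto
  finally show ?thesis
    using True by (simp add: potter_majorant_def)
next
  case False
  then have "1 < t / real n \<or> t \<le> 0"
    using n by (auto simp: not_le field_simps)
  then show ?thesis
    using p by (auto simp: nubar_eq_0_if_gt_1 potter_majorant_nonneg)
qed

lemma integral_binom_nubar_ratio_tendsto:
  fixes p :: "nat \<Rightarrow> real"
  assumes p01: "\<And>j. 0 \<le> p j \<and> p j \<le> 1" and summable: "summable p"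
    and \<alpha>: "0 < \<alpha>" "\<alpha> < 1" and rv: "regularly_varying p \<alpha> L" and r: "1 \<le> r"
  shows "(\<lambda>n. (\<integral>t. indicator {0<..} t * binom_profile_deriv r n t * nubar p (t / real n) \<partial>lborel)
            / nubar p (1 / real n)) \<longlonglongrightarrow> \<alpha> * Gamma (real r - \<alpha>) / fact r"
proof -
  define \<beta> where "\<beta> = (1 + \<alpha>) / 2"
  have \<beta>: "\<alpha> < \<beta>" "0 \<le> \<beta>" "\<beta> < 1" using \<alpha> by (auto simp: \<beta>_def)
  define S where "S n t = indicator {0<..} t * binom_profile_deriv r n t * (nubar p (t / real n) / nubar p (1 / real n))"
    for n t
  have "eventually (\<lambda>n. 2 * (real r + 1) \<le> real n) sequentially"
    by real_asymp
  moreover note eventually_gt_at_top[of r]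
  moreover note eventually_nubar_over_n_le[OF rv summable \<beta>(1,2)]
  ultimately have "eventually (\<lambda>n. r < n \<and> 2 * (real r + 1) \<le> real n \<and>
      (\<forall>t>0. nubar p (t / real n) \<le> (1 + 2 powr \<beta> * t powr (- \<beta>)) * nubar p (1 / real n))) sequentially"
    by eventually_elim blast
  then obtain N where N: "\<And>n. N \<le> n \<Longrightarrow> r < n \<and> 2 * (real r + 1) \<le> real n \<and>
      (\<forall>t>0. nubar p (t / real n) \<le> (1 + 2 powr \<beta> * t powr (- \<beta>)) * nubar p (1 / real n))"
    by (auto simp: eventually_sequentially)
  have lim: "(\<lambda>n. S n t) \<longlonglongrightarrow> indicator {0<..} t * poisson_profile_deriv r t * t powr (- \<alpha>)" for t
  proof (cases "0 < t")
    case True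
    then show ?thesis
      unfolding S_def
      by (intro tendsto_mult tendsto_const binom_profile_deriv_tendsto nubar_over_n_ratio_tendsto[OF rv])
  qed (simp add: S_def)
  have meas: "S n \<in> borel_measurable lborel" if "N \<le> n" for n
    using N[OF that] p01 borel_measurable_nubar_scaled[OF summable, of "real n"]
      borel_measurable_binom_profile_deriv[of n r]
    unfolding S_def by simp
  have limit: "has_bochner_integral lborel (\<lambda>t. indicator {0<..} t * poisson_profile_deriv r t * t powr (- \<alpha>))
      (\<alpha> * Gamma (real r - \<alpha>) / fact r)"
    using \<alpha> r by (rule has_bochner_integral_poisson_profile_deriv_powr)
  have "(\<lambda>i. integral\<^sup>L lborel (S (i + N))) \<longlonglongrightarrow>
      integral\<^sup>L lborel (\<lambda>t. indicator {0<..} t * poisson_profile_deriv r t * t powr (- \<alpha>))"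
  proof (rule integral_dominated_convergence[where w = "potter_majorant r \<beta>"])
    show "(\<lambda>t. indicator {0<..} t * poisson_profile_deriv r t * t powr (- \<alpha>)) \<in> borel_measurable lborel"
      using limit by (auto simp: has_bochner_integral_iff)
    show "integrable lborel (potter_majorant r \<beta>)"
      using \<beta>(3) r by (rule integrable_potter_majorant)
    show "S (i + N) \<in> borel_measurable lborel" for i
      by (rule meas) simp
    show "AE t in lborel. (\<lambda>i. S (i + N) t) \<longlonglongrightarrow> indicator {0<..} t * poisson_profile_deriv r t * t powr (- \<alpha>)"
      using LIMSEQ_ignore_initial_segment[OF lim] by simp
    show "AE t in lborel. norm (S (i + N) t) \<le> potter_majorant r \<beta> t" for i
      using N[of "i + N"] p01 unfolding S_def real_norm_def
      by (intro AE_I2 abs_binom_nubar_ratio_le_potter_majorant) auto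
  qed
  then have "(\<lambda>i. integral\<^sup>L lborel (S (i + N))) \<longlonglongrightarrow> \<alpha> * Gamma (real r - \<alpha>) / fact r"
    using limit by (simp add: has_bochner_integral_iff)
  moreover have "S n = (\<lambda>t. indicator {0<..} t * binom_profile_deriv r n t * nubar p (t / real n)
      / nubar p (1 / real n))" for n
    by (simp add: S_def[abs_def])
  ultimately show ?thesis
    by (simp add: LIMSEQ_offset)
qed

theorem theorem2:
  fixes p :: "nat \<Rightarrow> real" and \<alpha> :: real and L :: "real \<Rightarrow> real" and r :: nat
  assumes "\<And>j. 0 \<le> p j \<and> p j \<le> 1"
    and "summable p"
    and "0 < \<alpha>" and "\<alpha> < 1"
    and "regularly_varying p \<alpha> L"
    and "r \<ge> 1"
  shows "(\<lambda>n. EK p n r) \<sim>[at_top]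
           (\<lambda>n. \<alpha> * Gamma (real r - \<alpha>) / fact r * real n powr \<alpha> * L (real n))"
proof -
  define c where "c = \<alpha> * Gamma (real r - \<alpha>) / fact r"
  have "0 < Gamma (real r - \<alpha>)"
    using assms by (intro Gamma_real_pos) simp
  with assms(3) have "c \<noteq> 0" by (simp add: c_def)
  have "eventually (\<lambda>n. (\<integral>t. indicator {0<..} t * binom_profile_deriv r n t * nubar p (t / real n) \<partial>lborel)
      = EK p n r) sequentially"
    using eventually_gt_at_top[of r]
    by eventually_elim
       (use assms in \<open>blast intro: sums_unique2 binomial_terms_sums_integral_nubar EK_sums\<close>)
  then have "eventually (\<lambda>n. (\<integral>t. indicator {0<..} t * binom_profile_deriv r n t * nubar p (t / real n) \<partial>lborel)
      / nubar p (1 / real n) = EK p n r / nubar p (1 / real n)) sequentially"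
    by eventually_elim simp
  with integral_binom_nubar_ratio_tendsto[OF assms]
  have "(\<lambda>n. EK p n r / nubar p (1 / real n)) \<longlonglongrightarrow> c"
    unfolding c_def by (rule Lim_transform_eventually)
  then have "(\<lambda>n. EK p n r) \<sim>[sequentially] (\<lambda>n. c * nubar p (1 / real n))"
    using \<open>c \<noteq> 0\<close> by (rule asymp_equivI'_const)
  also have "(\<lambda>n. c * nubar p (1 / real n)) \<sim>[sequentially] (\<lambda>n. c * (real n powr \<alpha> * L (real n)))"
    by (intro asymp_equiv_mult asymp_equiv_refl nubar_over_n_asymp_equiv assms)
  finally show ?thesis
    by (simp add: c_def mult.assoc)
qed

end
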